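(* There exist a finite rank operator $S$ on $\ell_2$ (complex) with $\|I-S\|=1$, an element $\phi\in M_0(B_{\ell_2})$ of the fiber over $0$ of the spectrum of $H^\infty(B_{\ell_2})$, and $f\in H^\infty(B_{\ell_2})$ such that, with $P=I-S$, $\hat f(\phi)\neq\widehat{f\circ P}(\phi)$.
   Context: $H^\infty(B_{\ell_2})$ is the uniform algebra of all bounded holomorphic functions on the open unit ball $B_{\ell_2}$ of complex $\ell_2$, with the supremum norm. Its spectrum consists of the nonzero multiplicative linear functionals on it; the fiber over $0$, $M_0(B_{\ell_2})$, is the set of those $\phi$ in the spectrum with $\phi(x^* )=0$ for every continuous linear functional $x^*$ on $\ell_2$. $\hat f(\phi)=\phi(f)$. *)

theory Defs
  imports Complex_Main "HOL-Library.Function_Algebras"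
begin

definition l2 :: "(nat \<Rightarrow> complex) set" where
  "l2 = {x. summable (\<lambda>n. (cmod (x n))\<^sup>2)}"

definition l2norm :: "(nat \<Rightarrow> complex) \<Rightarrow> real" where
  "l2norm x = sqrt (\<Sum>n. (cmod (x n))\<^sup>2)"

definition l2_scale :: "complex \<Rightarrow> (nat \<Rightarrow> complex) \<Rightarrow> (nat \<Rightarrow> complex)" where
  "l2_scale c x = (\<lambda>n. c * x n)"

definition Bl2 :: "(nat \<Rightarrow> complex) set" where
  "Bl2 = {x \<in> l2. l2norm x < 1}"

definition l2_dual :: "((nat \<Rightarrow> complex) \<Rightarrow> complex) set" where
  "l2_dual = {L. (\<forall>x\<in>l2. \<forall>y\<in>l2. L (x + y) = L x + L y)
              \<and> (\<forall>c. \<forall>x\<in>l2. L (l2_scale c x) = c * L x)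
              \<and> (\<exists>K. \<forall>x\<in>l2. cmod (L x) \<le> K * l2norm x)}"

definition holomorphic_Bl2 :: "((nat \<Rightarrow> complex) \<Rightarrow> complex) \<Rightarrow> bool" where
  "holomorphic_Bl2 f \<longleftrightarrow>
     (\<forall>x\<in>Bl2. \<exists>L\<in>l2_dual. \<forall>\<epsilon>>0. \<exists>\<delta>>0. \<forall>h\<in>l2.
        l2norm h < \<delta> \<longrightarrow> x + h \<in> Bl2 \<longrightarrow>
        cmod (f (x + h) - f x - L h) \<le> \<epsilon> * l2norm h)"

text \<open>Functions on the ball are represented by functions vanishing outside it.\<close>
definition restrB :: "((nat \<Rightarrow> complex) \<Rightarrow> complex) \<Rightarrow> ((nat \<Rightarrow> complex) \<Rightarrow> complex)" where
  "restrB g = (\<lambda>x. if x \<in> Bl2 then g x else 0)"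

definition Hinf :: "((nat \<Rightarrow> complex) \<Rightarrow> complex) set" where
  "Hinf = {f. holomorphic_Bl2 f \<and> (\<exists>M. \<forall>x\<in>Bl2. cmod (f x) \<le> M)
             \<and> (\<forall>x. x \<notin> Bl2 \<longrightarrow> f x = 0)}"

definition Hinf_spectrum :: "(((nat \<Rightarrow> complex) \<Rightarrow> complex) \<Rightarrow> complex) set" where
  "Hinf_spectrum = {\<phi>.
      (\<forall>f\<in>Hinf. \<forall>g\<in>Hinf. \<phi> (\<lambda>x. f x + g x) = \<phi> f + \<phi> g)
    \<and> (\<forall>c. \<forall>f\<in>Hinf. \<phi> (\<lambda>x. c * f x) = c * \<phi> f)
    \<and> (\<forall>f\<in>Hinf. \<forall>g\<in>Hinf. \<phi> (\<lambda>x. f x * g x) = \<phi> f * \<phi> g)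
    \<and> (\<exists>f\<in>Hinf. \<phi> f \<noteq> 0)}"

definition fiber0 :: "(((nat \<Rightarrow> complex) \<Rightarrow> complex) \<Rightarrow> complex) set" where
  "fiber0 = {\<phi> \<in> Hinf_spectrum. \<forall>L\<in>l2_dual. \<phi> (restrB L) = 0}"

definition bounded_op_l2 :: "((nat \<Rightarrow> complex) \<Rightarrow> (nat \<Rightarrow> complex)) \<Rightarrow> bool" where
  "bounded_op_l2 T \<longleftrightarrow> (\<forall>x\<in>l2. T x \<in> l2)
     \<and> (\<forall>x\<in>l2. \<forall>y\<in>l2. T (x + y) = T x + T y)
     \<and> (\<forall>c. \<forall>x\<in>l2. T (l2_scale c x) = l2_scale c (T x))
     \<and> (\<exists>K. \<forall>x\<in>l2. l2norm (T x) \<le> K * l2norm x)"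

definition finite_rank_l2 :: "((nat \<Rightarrow> complex) \<Rightarrow> (nat \<Rightarrow> complex)) \<Rightarrow> bool" where
  "finite_rank_l2 T \<longleftrightarrow> bounded_op_l2 T \<and>
     (\<exists>n::nat. \<exists>v. (\<forall>i<n. v i \<in> l2) \<and>
        (\<forall>x\<in>l2. \<exists>c. T x = (\<Sum>i<n. l2_scale (c i) (v i))))"

definition opnorm_l2 :: "((nat \<Rightarrow> complex) \<Rightarrow> (nat \<Rightarrow> complex)) \<Rightarrow> real" where
  "opnorm_l2 T = Sup {l2norm (T x) | x. x \<in> l2 \<and> l2norm x \<le> 1}"

end

theory Submission
  imports Defs "HOL-Analysis.Analysis"
begin

(* The function is f(x) = x_0^2 / (1 - sum_{k>=1} x_k^2).  It is bounded by 1
   on the ball and holomorphic there (its Frechet remainder is estimated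
   directly), and f o P = 0.  Along the test points p_n = a_n e_0 + b_n e_{n+1}
   with a_n -> 0 and a_n^2 + b_n^2 < 1 chosen so that f(p_n) = 1/2, every
   continuous functional tends to 0 (Bessel's inequality).  A filter finer
   than the cofinite one, along which all bounded scalar sequences converge,
   is produced from Tychonoff's theorem; the limit of g(p_n) along it is a
   character of H^infinity vanishing on the dual of l2, with phi(f) = 1/2. *)

lemma inf_filtercomap_neq_bot:
  assumes "inf N (filtermap f F) \<noteq> bot"
  shows "inf (filtercomap f N) F \<noteq> bot"
proof
  assume "inf (filtercomap f N) F = bot"
  then obtain Q Q' where Q: "eventually Q (filtercomap f N)"
      and Q': "eventually Q' F" and disjoint: "\<And>x. Q x \<Longrightarrow> Q' x \<Longrightarrow> False"
    unfolding trivial_limit_def eventually_inf by blast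
  from Q obtain R where R: "eventually R N" and RQ: "\<And>x. R (f x) \<Longrightarrow> Q x"
    unfolding eventually_filtercomap by blast
  have "eventually (\<lambda>y. y \<in> f ` {x. Q' x}) (filtermap f F)"
    using Q' by (auto simp: eventually_filtermap elim: eventually_mono)
  with R have "eventually (\<lambda>_. False) (inf N (filtermap f F))"
    unfolding eventually_inf using RQ disjoint by blast
  with assms show False by (simp add: trivial_limit_def)
qed

(* A substitute for an ultrafilter: there is a proper filter G finer than the
   cofinite filter along which every bounded sequence (in a Heine-Borel space)
   converges.  G is pulled back from a cluster point phi of the points
   delta n = (s |-> s n) of the compact product of the closures of the bounded
   ranges (Tychonoff); the coordinate s of phi is then the G-limit of s. *)
lemma bounded_sequences_converge_along_refinement:
  "\<exists>G. G \<noteq> bot \<and> G \<le> sequentially \<and>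
     (\<forall>s :: nat \<Rightarrow> 'a::heine_borel. bounded (range s) \<longrightarrow> (\<exists>l. (s \<longlongrightarrow> l) G))"
proof -
  define T :: "(nat \<Rightarrow> 'a) \<Rightarrow> nat \<Rightarrow> 'a"
    where "T s = (if bounded (range s) then s else (\<lambda>_. undefined))" for s
  define \<delta> :: "nat \<Rightarrow> (nat \<Rightarrow> 'a) \<Rightarrow> 'a" where "\<delta> n = (\<lambda>s. T s n)" for n
  define K where "K = PiE UNIV (\<lambda>s. closure (range (T s)))"
  have "bounded (range (T s))" for s by (simp add: T_def)
  then have "compact K"
    unfolding K_def compactin_euclidean_iff[symmetric] euclidean_product_topology[symmetric]
    by (simp add: compactin_PiE)
  moreover have "filtermap \<delta> sequentially \<noteq> bot" by (simp add: filtermap_bot_iff)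
  moreover have "eventually (\<lambda>\<psi>. \<psi> \<in> K) (filtermap \<delta> sequentially)"
    unfolding eventually_filtermap K_def \<delta>_def
    by (intro always_eventually allI) (auto intro: closure_subset[THEN subsetD])
  ultimately obtain \<phi> where cluster: "inf (nhds \<phi>) (filtermap \<delta> sequentially) \<noteq> bot"
    unfolding compact_filter by blast
  define G where "G = inf (filtercomap \<delta> (nhds \<phi>)) sequentially"
  have "G \<noteq> bot"
    unfolding G_def by (rule inf_filtercomap_neq_bot[OF cluster])
  moreover have "G \<le> sequentially" by (simp add: G_def)
  moreover have "(s \<longlongrightarrow> \<phi> s) G" if "bounded (range s)" for s
  proof -
    have "((\<lambda>\<psi>. \<psi> s) \<longlongrightarrow> \<phi> s) (nhds \<phi>)"
      using continuous_on_product_coordinates[of s] tendsto_at_iff_tendsto_nhds[of "\<lambda>\<psi>. \<psi> s" \<phi>]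
      unfolding continuous_on_def by blast
    then have "((\<lambda>n. \<delta> n s) \<longlongrightarrow> \<phi> s) (filtercomap \<delta> (nhds \<phi>))"
      by (rule filterlim_filtercomapI)
    then show ?thesis
      using that unfolding G_def \<delta>_def T_def by (auto intro: tendsto_mono[OF inf_le1])
  qed
  ultimately show ?thesis by blast
qed

definition l2sq :: "(nat \<Rightarrow> complex) \<Rightarrow> real" where
  "l2sq x = (\<Sum>n. (cmod (x n))\<^sup>2)"

lemma l2D: "x \<in> l2 \<Longrightarrow> summable (\<lambda>n. (cmod (x n))\<^sup>2)"
  by (simp add: l2_def)

lemma l2sq_nonneg: "x \<in> l2 \<Longrightarrow> 0 \<le> l2sq x"
  unfolding l2sq_def by (simp add: l2D suminf_nonneg)

lemma l2norm_nonneg: "x \<in> l2 \<Longrightarrow> 0 \<le> l2norm x"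
  using l2sq_nonneg by (simp add: l2norm_def l2sq_def)

lemma l2norm_squared: "x \<in> l2 \<Longrightarrow> (l2norm x)\<^sup>2 = l2sq x"
  using l2sq_nonneg by (simp add: l2norm_def l2sq_def)

lemma l2_finite_support:
  assumes "finite A" and "\<And>n. n \<notin> A \<Longrightarrow> x n = 0"
  shows "x \<in> l2" and "l2sq x = (\<Sum>n\<in>A. (cmod (x n))\<^sup>2)"
proof -
  have zero: "\<And>n. n \<notin> A \<Longrightarrow> (cmod (x n))\<^sup>2 = 0" using assms(2) by simp
  show "x \<in> l2" using summable_finite[OF assms(1) zero] by (simp add: l2_def)
  show "l2sq x = (\<Sum>n\<in>A. (cmod (x n))\<^sup>2)"
    using suminf_finite[OF assms(1) zero] by (simp add: l2sq_def)
qed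

lemma l2_scale_l2: "x \<in> l2 \<Longrightarrow> l2_scale c x \<in> l2"
  using summable_mult[OF l2D, of x "(cmod c)\<^sup>2"]
  by (simp add: l2_def l2_scale_def norm_mult power_mult_distrib)

lemma coordinate_sq_le: "x \<in> l2 \<Longrightarrow> (cmod (x k))\<^sup>2 \<le> l2sq x"
  using sum_le_suminf[OF l2D, of x "{k}"] by (simp add: l2sq_def)

lemma coordinate_le_l2norm: "x \<in> l2 \<Longrightarrow> cmod (x k) \<le> l2norm x"
  using coordinate_sq_le[of x k] by (simp add: l2norm_def l2sq_def real_le_rsqrt)

lemma l2_tail_summable: "x \<in> l2 \<Longrightarrow> summable (\<lambda>k. (cmod (x (Suc k)))\<^sup>2)"
  using summable_Suc_iff[of "\<lambda>n. (cmod (x n))\<^sup>2"] by (simp add: l2D)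

lemma l2_tail_sum: "x \<in> l2 \<Longrightarrow> (\<Sum>k. (cmod (x (Suc k)))\<^sup>2) = l2sq x - (cmod (x 0))\<^sup>2"
  using suminf_split_head[OF l2D] by (simp add: l2sq_def)

lemma Bl2_l2sq:
  assumes "x \<in> Bl2" shows "x \<in> l2" and "l2sq x < 1"
proof -
  show x: "x \<in> l2" using assms by (simp add: Bl2_def)
  have "(l2norm x)\<^sup>2 < 1"
    using assms l2norm_nonneg[OF x] by (simp add: Bl2_def power_less_one_iff)
  then show "l2sq x < 1" using l2norm_squared[OF x] by simp
qed

lemma Cauchy_Schwarz_series:
  fixes a b :: "nat \<Rightarrow> real"
  assumes a: "summable (\<lambda>k. (a k)\<^sup>2)" and b: "summable (\<lambda>k. (b k)\<^sup>2)"
  shows "summable (\<lambda>k. a k * b k)"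
    and "\<bar>\<Sum>k. a k * b k\<bar> \<le> sqrt (\<Sum>k. (a k)\<^sup>2) * sqrt (\<Sum>k. (b k)\<^sup>2)"
proof -
  have am_gm: "norm (a k * b k) \<le> ((a k)\<^sup>2 + (b k)\<^sup>2) / 2" for k
    using sum_squares_bound[of "\<bar>a k\<bar>" "\<bar>b k\<bar>"] by (simp add: abs_mult)
  have "summable (\<lambda>k. ((a k)\<^sup>2 + (b k)\<^sup>2) / 2)"
    using a b by (intro summable_divide summable_add)
  then show ab: "summable (\<lambda>k. a k * b k)"
    by (rule summable_comparison_test'[where N=0]) (rule am_gm)
  have "\<bar>\<Sum>k<n. a k * b k\<bar> \<le> sqrt (\<Sum>k. (a k)\<^sup>2) * sqrt (\<Sum>k. (b k)\<^sup>2)" for n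
  proof -
    have "(\<Sum>k<n. a k * b k)\<^sup>2 \<le> (\<Sum>k<n. (a k)\<^sup>2) * (\<Sum>k<n. (b k)\<^sup>2)"
      by (rule Cauchy_Schwarz_ineq_sum)
    also have "\<dots> \<le> (\<Sum>k. (a k)\<^sup>2) * (\<Sum>k. (b k)\<^sup>2)"
      by (intro mult_mono sum_le_suminf a b sum_nonneg suminf_nonneg) auto
    finally have "sqrt ((\<Sum>k<n. a k * b k)\<^sup>2) \<le> sqrt ((\<Sum>k. (a k)\<^sup>2) * (\<Sum>k. (b k)\<^sup>2))"
      by (rule real_sqrt_le_mono)
    then show ?thesis by (simp add: real_sqrt_mult)
  qed
  then show "\<bar>\<Sum>k. a k * b k\<bar> \<le> sqrt (\<Sum>k. (a k)\<^sup>2) * sqrt (\<Sum>k. (b k)\<^sup>2)"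
    by (intro LIMSEQ_le_const2[OF tendsto_rabs[OF summable_LIMSEQ[OF ab]]]) auto
qed

(* The symmetric bilinear form B(x,h) = sum_{k>=1} x_k h_k and its quadratic
   form Q(x) = B(x,x).  They are complex-bilinear (no conjugation), hence
   holomorphic. *)
definition tail_form :: "(nat \<Rightarrow> complex) \<Rightarrow> (nat \<Rightarrow> complex) \<Rightarrow> complex" where
  "tail_form x h = (\<Sum>k. x (Suc k) * h (Suc k))"

definition tail_square :: "(nat \<Rightarrow> complex) \<Rightarrow> complex" where
  "tail_square x = (\<Sum>k. (x (Suc k))\<^sup>2)"

lemma tail_form_abs_summable:
  assumes "x \<in> l2" "h \<in> l2"
  shows "summable (\<lambda>k. cmod (x (Suc k) * h (Suc k)))"
    and "(\<Sum>k. cmod (x (Suc k) * h (Suc k))) \<le> l2norm x * l2norm h"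
proof -
  note CS = Cauchy_Schwarz_series[OF l2_tail_summable[OF assms(1)] l2_tail_summable[OF assms(2)]]
  show "summable (\<lambda>k. cmod (x (Suc k) * h (Suc k)))"
    using CS(1) by (simp add: norm_mult)
  have tail_le: "sqrt (\<Sum>k. (cmod (y (Suc k)))\<^sup>2) \<le> l2norm y" if "y \<in> l2" for y
    using l2_tail_sum[OF that] by (simp add: l2norm_def l2sq_def)
  have "(\<Sum>k. cmod (x (Suc k) * h (Suc k)))
      \<le> sqrt (\<Sum>k. (cmod (x (Suc k)))\<^sup>2) * sqrt (\<Sum>k. (cmod (h (Suc k)))\<^sup>2)"
    using CS(2) by (simp add: norm_mult)
  also have "\<dots> \<le> l2norm x * l2norm h"
    by (intro mult_mono tail_le assms l2norm_nonneg real_sqrt_ge_zero suminf_nonneg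
        l2_tail_summable) simp_all
  finally show "(\<Sum>k. cmod (x (Suc k) * h (Suc k))) \<le> l2norm x * l2norm h" .
qed

lemma tail_form_summable: "x \<in> l2 \<Longrightarrow> h \<in> l2 \<Longrightarrow> summable (\<lambda>k. x (Suc k) * h (Suc k))"
  by (rule summable_norm_cancel[OF tail_form_abs_summable(1)])

lemma tail_form_bound:
  assumes "x \<in> l2" "h \<in> l2"
  shows "cmod (tail_form x h) \<le> l2norm x * l2norm h"
  unfolding tail_form_def
  using summable_norm[OF tail_form_abs_summable(1)[OF assms]] tail_form_abs_summable(2)[OF assms]
  by linarith

lemma tail_square_bound: "x \<in> l2 \<Longrightarrow> cmod (tail_square x) \<le> l2sq x - (cmod (x 0))\<^sup>2"
  using summable_norm[of "\<lambda>k. (x (Suc k))\<^sup>2"] l2_tail_summable[of x] l2_tail_sum[of x]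
  by (simp add: tail_square_def norm_power)

lemma tail_square_add:
  assumes x: "x \<in> l2" and h: "h \<in> l2"
  shows "tail_square (x + h) = tail_square x + 2 * tail_form x h + tail_square h"
proof -
  have sq: "summable (\<lambda>k. (y (Suc k))\<^sup>2)" if "y \<in> l2" for y
    using tail_form_summable[OF that that] by (simp add: power2_eq_square)
  have xh: "summable (\<lambda>k. 2 * (x (Suc k) * h (Suc k)))"
    by (intro summable_mult tail_form_summable x h)
  have "tail_square (x + h) = (\<Sum>k. ((x (Suc k))\<^sup>2 + 2 * (x (Suc k) * h (Suc k))) + (h (Suc k))\<^sup>2)"
    unfolding tail_square_def by (simp add: power2_sum algebra_simps)
  also have "\<dots> = (\<Sum>k. (x (Suc k))\<^sup>2 + 2 * (x (Suc k) * h (Suc k))) + tail_square h"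
    unfolding tail_square_def by (intro suminf_add[symmetric] summable_add sq x h xh)
  also have "(\<Sum>k. (x (Suc k))\<^sup>2 + 2 * (x (Suc k) * h (Suc k)))
      = tail_square x + (\<Sum>k. 2 * (x (Suc k) * h (Suc k)))"
    unfolding tail_square_def by (intro suminf_add[symmetric] sq x xh)
  also have "(\<Sum>k. 2 * (x (Suc k) * h (Suc k))) = 2 * tail_form x h"
    unfolding tail_form_def by (intro suminf_mult tail_form_summable x h)
  finally show ?thesis .
qed

(* The second-order remainder of (a + alpha)^2 / (D - beta - gamma) around
   a^2 / D, written as one fraction; used with alpha = h_0, beta = 2 B(x,h),
   gamma = Q(h). *)
lemma quotient_remainder_identity:
  fixes a \<alpha> \<beta> \<gamma> D :: complex
  assumes "D \<noteq> 0" and "D - \<beta> - \<gamma> \<noteq> 0"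
  shows "(a + \<alpha>)\<^sup>2 / (D - \<beta> - \<gamma>) - a\<^sup>2 / D - 2 * a * \<alpha> / D - a\<^sup>2 * \<beta> / D\<^sup>2
       = (\<alpha>\<^sup>2 * D\<^sup>2 + a\<^sup>2 * D * \<gamma> + 2 * a * \<alpha> * D * (\<beta> + \<gamma>) + a\<^sup>2 * \<beta> * (\<beta> + \<gamma>))
         / ((D - \<beta> - \<gamma>) * D\<^sup>2)"
proof -
  define E where "E = D - \<beta> - \<gamma>"
  have E: "E \<noteq> 0" and \<gamma>: "\<gamma> = D - \<beta> - E" using assms by (simp_all add: E_def)
  show ?thesis
    unfolding E_def[symmetric] unfolding \<gamma> using assms(1) E
    by (simp add: field_simps power2_eq_square)
qed

lemma quotient_remainder_numerator_bound:
  fixes a \<alpha> \<beta> \<gamma> D :: complex and t :: real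
  assumes "cmod a \<le> 1" "cmod D \<le> 2" "cmod \<alpha> \<le> t" "cmod \<beta> \<le> 2 * t"
    and "cmod (\<beta> + \<gamma>) \<le> 3 * t" "cmod \<gamma> \<le> t\<^sup>2" "0 \<le> t"
  shows "cmod (\<alpha>\<^sup>2 * D\<^sup>2 + a\<^sup>2 * D * \<gamma> + 2 * a * \<alpha> * D * (\<beta> + \<gamma>) + a\<^sup>2 * \<beta> * (\<beta> + \<gamma>))
         \<le> 24 * t\<^sup>2"
proof -
  have "cmod (\<alpha>\<^sup>2 * D\<^sup>2) \<le> t\<^sup>2 * 2\<^sup>2"
    unfolding norm_mult norm_power using assms by (intro mult_mono power_mono) auto
  moreover have "cmod (a\<^sup>2 * D * \<gamma>) \<le> 1\<^sup>2 * 2 * t\<^sup>2"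
    unfolding norm_mult norm_power using assms by (intro mult_mono power_mono) auto
  moreover have "cmod (2 * a * \<alpha> * D * (\<beta> + \<gamma>)) \<le> 2 * 1 * t * 2 * (3 * t)"
    unfolding norm_mult using assms by (intro mult_mono) auto
  moreover have "cmod (a\<^sup>2 * \<beta> * (\<beta> + \<gamma>)) \<le> 1\<^sup>2 * (2 * t) * (3 * t)"
    unfolding norm_mult norm_power using assms by (intro mult_mono power_mono) auto
  moreover have "cmod (\<alpha>\<^sup>2 * D\<^sup>2 + a\<^sup>2 * D * \<gamma> + 2 * a * \<alpha> * D * (\<beta> + \<gamma>) + a\<^sup>2 * \<beta> * (\<beta> + \<gamma>))
      \<le> cmod (\<alpha>\<^sup>2 * D\<^sup>2) + cmod (a\<^sup>2 * D * \<gamma>) + cmod (2 * a * \<alpha> * D * (\<beta> + \<gamma>))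
         + cmod (a\<^sup>2 * \<beta> * (\<beta> + \<gamma>))"
    by (intro order_trans[OF norm_triangle_ineq] add_mono order_refl)
  ultimately show ?thesis by (simp add: power2_eq_square)
qed

lemma quotient_remainder_bound:
  fixes a \<alpha> \<beta> \<gamma> D :: complex and t m :: real
  assumes a: "cmod a \<le> 1" and m: "0 < m" "m \<le> cmod D" and D: "cmod D \<le> 2"
    and \<alpha>: "cmod \<alpha> \<le> t" and \<beta>: "cmod \<beta> \<le> 2 * t" and \<gamma>: "cmod \<gamma> \<le> t\<^sup>2"
    and t: "0 \<le> t" "t \<le> 1" "t \<le> m / 8"
  shows "cmod ((a + \<alpha>)\<^sup>2 / (D - \<beta> - \<gamma>) - a\<^sup>2 / D - 2 * a * \<alpha> / D - a\<^sup>2 * \<beta> / D\<^sup>2)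
         \<le> 48 * t\<^sup>2 / m ^ 3"
proof -
  have "t\<^sup>2 \<le> t" using t by (simp add: power2_eq_square mult_left_le)
  then have \<beta>\<gamma>: "cmod (\<beta> + \<gamma>) \<le> 3 * t"
    using norm_triangle_ineq[of \<beta> \<gamma>] \<beta> \<gamma> by linarith
  have "cmod D - cmod (\<beta> + \<gamma>) \<le> cmod (D - \<beta> - \<gamma>)"
    using norm_triangle_ineq2[of D "\<beta> + \<gamma>"] by (simp add: algebra_simps)
  then have E: "m / 2 \<le> cmod (D - \<beta> - \<gamma>)" using \<beta>\<gamma> t m by linarith
  have "m ^ 3 / 2 = (m / 2) * m\<^sup>2" by (simp add: power2_eq_square power3_eq_cube)
  also have "\<dots> \<le> cmod (D - \<beta> - \<gamma>) * (cmod D)\<^sup>2"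
    using m E by (intro mult_mono power_mono) auto
  finally have denominator: "m ^ 3 / 2 \<le> cmod ((D - \<beta> - \<gamma>) * D\<^sup>2)"
    by (simp add: norm_mult norm_power)
  have "D \<noteq> 0" "D - \<beta> - \<gamma> \<noteq> 0" using m E by auto
  then have "cmod ((a + \<alpha>)\<^sup>2 / (D - \<beta> - \<gamma>) - a\<^sup>2 / D - 2 * a * \<alpha> / D - a\<^sup>2 * \<beta> / D\<^sup>2)
      = cmod (\<alpha>\<^sup>2 * D\<^sup>2 + a\<^sup>2 * D * \<gamma> + 2 * a * \<alpha> * D * (\<beta> + \<gamma>) + a\<^sup>2 * \<beta> * (\<beta> + \<gamma>))
        / cmod ((D - \<beta> - \<gamma>) * D\<^sup>2)"
    by (simp add: quotient_remainder_identity norm_divide)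
  also have "\<dots> \<le> (24 * t\<^sup>2) / (m ^ 3 / 2)"
    using quotient_remainder_numerator_bound[OF a D \<alpha> \<beta> \<beta>\<gamma> \<gamma> t(1)] denominator m
    by (intro frac_le) auto
  finally show ?thesis by simp
qed

(* It vanishes on the hyperplane x_0 = 0, yet it equals 1/2 along a weakly null
   sequence in the ball; this is the whole point of the counterexample. *)
definition quotient_fun :: "(nat \<Rightarrow> complex) \<Rightarrow> complex" where
  "quotient_fun x = (x 0)\<^sup>2 / (1 - tail_square x)"

definition fquot :: "(nat \<Rightarrow> complex) \<Rightarrow> complex" where
  "fquot = restrB quotient_fun"

lemma denominator_bounds:
  assumes "x \<in> Bl2"
  shows "1 - l2sq x \<le> cmod (1 - tail_square x)" and "cmod (1 - tail_square x) \<le> 2"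
    and "(cmod (x 0))\<^sup>2 < cmod (1 - tail_square x)" and "cmod (x 0) \<le> 1"
proof -
  note x = Bl2_l2sq[OF assms]
  have Q: "cmod (tail_square x) \<le> l2sq x - (cmod (x 0))\<^sup>2" by (rule tail_square_bound[OF x(1)])
  have lower: "1 - cmod (tail_square x) \<le> cmod (1 - tail_square x)"
    using norm_triangle_ineq2[of 1 "tail_square x"] by simp
  have upper: "cmod (1 - tail_square x) \<le> 1 + cmod (tail_square x)"
    using norm_triangle_ineq4[of 1 "tail_square x"] by simp
  have "0 \<le> (cmod (x 0))\<^sup>2" by simp
  then show "1 - l2sq x \<le> cmod (1 - tail_square x)" and "cmod (1 - tail_square x) \<le> 2"
    and "(cmod (x 0))\<^sup>2 < cmod (1 - tail_square x)"
    using Q lower upper x(2) by linarith+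
  have "(cmod (x 0))\<^sup>2 \<le> 1" using coordinate_sq_le[OF x(1), of 0] x(2) by linarith
  then show "cmod (x 0) \<le> 1" by (simp add: power_le_one_iff)
qed

lemma fquot_bounded: "cmod (fquot x) \<le> 1"
proof (cases "x \<in> Bl2")
  case True
  note lt = denominator_bounds(3)[OF True]
  then have "0 < cmod (1 - tail_square x)" using zero_le_power2[of "cmod (x 0)"] by linarith
  then show ?thesis
    using True lt by (simp add: fquot_def restrB_def quotient_fun_def norm_divide norm_power)
qed (simp add: fquot_def restrB_def)

lemma l2_dual_coordinate: "(\<lambda>h. h k) \<in> l2_dual"
  unfolding l2_dual_def using coordinate_le_l2norm
  by (intro CollectI conjI exI[of _ 1] ballI allI) (auto simp: l2_scale_def)

lemma l2_dual_tail_form: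
  assumes x: "x \<in> l2"
  shows "tail_form x \<in> l2_dual"
  unfolding l2_dual_def
proof (intro CollectI conjI ballI allI)
  fix h1 h2 assume h: "h1 \<in> l2" "h2 \<in> l2"
  show "tail_form x (h1 + h2) = tail_form x h1 + tail_form x h2"
    unfolding tail_form_def
    using suminf_add[OF tail_form_summable[OF x h(1)] tail_form_summable[OF x h(2)]]
    by (simp add: distrib_left)
next
  fix c h assume h: "h \<in> l2"
  show "tail_form x (l2_scale c h) = c * tail_form x h"
    unfolding tail_form_def l2_scale_def
    using suminf_mult[OF tail_form_summable[OF x h], of c] by (simp add: algebra_simps)
next
  show "\<exists>K. \<forall>h\<in>l2. cmod (tail_form x h) \<le> K * l2norm h"
    using tail_form_bound[OF x] by (intro exI[of _ "l2norm x"]) auto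
qed

lemma l2_dual_lincomb:
  assumes L1: "L1 \<in> l2_dual" and L2: "L2 \<in> l2_dual"
  shows "(\<lambda>h. c1 * L1 h + c2 * L2 h) \<in> l2_dual"
proof -
  obtain K1 K2 where K1: "\<forall>h\<in>l2. cmod (L1 h) \<le> K1 * l2norm h"
    and K2: "\<forall>h\<in>l2. cmod (L2 h) \<le> K2 * l2norm h"
    using L1 L2 unfolding l2_dual_def by blast
  have bound: "cmod (c1 * L1 h + c2 * L2 h) \<le> (cmod c1 * K1 + cmod c2 * K2) * l2norm h"
    if "h \<in> l2" for h
  proof -
    have "cmod (c1 * L1 h + c2 * L2 h) \<le> cmod c1 * cmod (L1 h) + cmod c2 * cmod (L2 h)"
      using norm_triangle_ineq[of "c1 * L1 h" "c2 * L2 h"] by (simp add: norm_mult)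
    also have "\<dots> \<le> cmod c1 * (K1 * l2norm h) + cmod c2 * (K2 * l2norm h)"
      using K1 K2 that by (intro add_mono mult_left_mono) auto
    finally show ?thesis by (simp add: algebra_simps)
  qed
  show ?thesis
    using L1 L2 bound unfolding l2_dual_def
    by (intro CollectI conjI ballI allI exI[of _ "cmod c1 * K1 + cmod c2 * K2"])
       (auto simp: algebra_simps)
qed

lemma fquot_increment:
  assumes x: "x \<in> Bl2" and h: "h \<in> l2" and xh: "x + h \<in> Bl2"
  shows "fquot (x + h)
         = (x 0 + h 0)\<^sup>2 / ((1 - tail_square x) - 2 * tail_form x h - tail_square h)"
  using xh tail_square_add[OF Bl2_l2sq(1)[OF x] h]
  by (simp add: fquot_def restrB_def quotient_fun_def algebra_simps)

definition fquot_deriv :: "(nat \<Rightarrow> complex) \<Rightarrow> (nat \<Rightarrow> complex) \<Rightarrow> complex" where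
  "fquot_deriv x h = 2 * x 0 / (1 - tail_square x) * h 0
                     + 2 * (x 0)\<^sup>2 / (1 - tail_square x)\<^sup>2 * tail_form x h"

lemma fquot_deriv_dual: "x \<in> l2 \<Longrightarrow> fquot_deriv x \<in> l2_dual"
  unfolding fquot_deriv_def[abs_def]
  by (intro l2_dual_lincomb l2_dual_coordinate l2_dual_tail_form)

lemma fquot_remainder:
  assumes x: "x \<in> Bl2" and h: "h \<in> l2" and xh: "x + h \<in> Bl2"
    and small: "l2norm h \<le> 1" "l2norm h \<le> (1 - l2sq x) / 8"
  shows "cmod (fquot (x + h) - fquot x - fquot_deriv x h)
         \<le> 48 * (l2norm h)\<^sup>2 / (1 - l2sq x) ^ 3"
proof -
  note xl = Bl2_l2sq[OF x]
  define t where "t = l2norm h"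
  have t: "0 \<le> t" using l2norm_nonneg[OF h] by (simp add: t_def)
  have "l2norm x \<le> 1" using x by (simp add: Bl2_def)
  then have \<beta>: "cmod (2 * tail_form x h) \<le> 2 * t"
    using tail_form_bound[OF xl(1) h] mult_right_mono[OF \<open>l2norm x \<le> 1\<close> t]
    by (simp add: t_def)
  have \<gamma>: "cmod (tail_square h) \<le> t\<^sup>2"
    using tail_square_bound[OF h] l2norm_squared[OF h] zero_le_power2[of "cmod (h 0)"]
    unfolding t_def by linarith
  have "cmod ((x 0 + h 0)\<^sup>2 / ((1 - tail_square x) - 2 * tail_form x h - tail_square h)
          - (x 0)\<^sup>2 / (1 - tail_square x) - 2 * x 0 * h 0 / (1 - tail_square x)
          - (x 0)\<^sup>2 * (2 * tail_form x h) / (1 - tail_square x)\<^sup>2)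
        \<le> 48 * t\<^sup>2 / (1 - l2sq x) ^ 3"
    using xl(2) denominator_bounds[OF x] coordinate_le_l2norm[OF h] small t
    by (intro quotient_remainder_bound \<beta> \<gamma>) (auto simp: t_def)
  then show ?thesis
    using x unfolding fquot_increment[OF x h xh] fquot_deriv_def t_def
    by (simp add: fquot_def restrB_def quotient_fun_def algebra_simps)
qed

(* f is holomorphic on the ball: near x, the quadratic remainder bound beats
   any epsilon once ||h|| <= epsilon m^3 / 48. *)
lemma fquot_holomorphic: "holomorphic_Bl2 fquot"
  unfolding holomorphic_Bl2_def
proof
  fix x assume x: "x \<in> Bl2"
  define m where "m = 1 - l2sq x"
  have m: "0 < m" using Bl2_l2sq(2)[OF x] by (simp add: m_def)
  have "\<exists>\<delta>>0. \<forall>h\<in>l2. l2norm h < \<delta> \<longrightarrow> x + h \<in> Bl2 \<longrightarrow>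
      cmod (fquot (x + h) - fquot x - fquot_deriv x h) \<le> \<epsilon> * l2norm h"
    if \<epsilon>: "0 < \<epsilon>" for \<epsilon> :: real
  proof (intro exI[of _ "min 1 (min (m / 8) (\<epsilon> * m ^ 3 / 48))"] conjI ballI impI)
    show "0 < min 1 (min (m / 8) (\<epsilon> * m ^ 3 / 48))" using \<epsilon> m by simp
    fix h
    assume h: "h \<in> l2" "l2norm h < min 1 (min (m / 8) (\<epsilon> * m ^ 3 / 48))" "x + h \<in> Bl2"
    have t: "0 \<le> l2norm h" "48 * l2norm h / m ^ 3 \<le> \<epsilon>"
      using l2norm_nonneg[OF h(1)] h(2) m by (auto simp: field_simps)
    have "cmod (fquot (x + h) - fquot x - fquot_deriv x h) \<le> 48 * (l2norm h)\<^sup>2 / m ^ 3"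
      using fquot_remainder[OF x h(1) h(3)] h(2) by (simp add: m_def)
    also have "\<dots> = l2norm h * (48 * l2norm h / m ^ 3)" by (simp add: power2_eq_square)
    also have "\<dots> \<le> l2norm h * \<epsilon>" by (rule mult_left_mono[OF t(2) t(1)])
    finally show "cmod (fquot (x + h) - fquot x - fquot_deriv x h) \<le> \<epsilon> * l2norm h"
      by (simp add: mult.commute)
  qed
  then show "\<exists>L\<in>l2_dual. \<forall>\<epsilon>>0. \<exists>\<delta>>0. \<forall>h\<in>l2. l2norm h < \<delta> \<longrightarrow> x + h \<in> Bl2 \<longrightarrow>
      cmod (fquot (x + h) - fquot x - L h) \<le> \<epsilon> * l2norm h"
    using fquot_deriv_dual[OF Bl2_l2sq(1)[OF x]] by blast
qed

lemma fquot_Hinf: "fquot \<in> Hinf"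
proof -
  have "\<forall>x. x \<notin> Bl2 \<longrightarrow> fquot x = 0" by (simp add: fquot_def restrB_def)
  then show ?thesis
    unfolding Hinf_def using fquot_holomorphic fquot_bounded by blast
qed

definition unit_vec :: "nat \<Rightarrow> nat \<Rightarrow> complex" where
  "unit_vec k = (\<lambda>j. if j = k then 1 else 0)"

lemma unit_vec_l2: "unit_vec k \<in> l2" and l2norm_unit_vec: "l2norm (unit_vec k) = 1"
  using l2_finite_support[of "{k}" "unit_vec k"] by (auto simp: unit_vec_def l2norm_def l2sq_def)

lemma l2_dual_finite_combination:
  assumes L: "L \<in> l2_dual"
  shows "L (\<lambda>j. if j < N then v j else 0) = (\<Sum>k<N. v k * L (unit_vec k))"
proof (induction N)
  case 0
  have "L (\<lambda>j. 0) = L (l2_scale 0 (unit_vec 0))" by (simp add: l2_scale_def)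
  then show ?case using L unit_vec_l2 by (simp add: l2_dual_def)
next
  case (Suc N)
  have split: "(\<lambda>j. if j < Suc N then v j else 0)
      = (\<lambda>j. if j < N then v j else 0) + l2_scale (v N) (unit_vec N)"
    by (auto simp: l2_scale_def unit_vec_def fun_eq_iff less_Suc_eq)
  have "(\<lambda>j. if j < N then v j else 0) \<in> l2"
    by (rule l2_finite_support(1)[of "{..<N}"]) auto
  then show ?case
    using L Suc.IH unit_vec_l2 l2_scale_l2[OF unit_vec_l2]
    unfolding split by (simp add: l2_dual_def)
qed

lemma le_square_if_le_mult_sqrt:
  fixes s K :: real
  assumes "0 \<le> s" and "s \<le> K * sqrt s"
  shows "s \<le> K\<^sup>2"
proof (cases "s = 0")
  case False
  then have pos: "0 < sqrt s" using assms(1) by simp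
  have "sqrt s * sqrt s \<le> K * sqrt s" using assms by simp
  then have "sqrt s \<le> K" using pos by (rule mult_right_le_imp_le)
  then have "(sqrt s)\<^sup>2 \<le> K\<^sup>2" using pos by (intro power_mono) auto
  then show ?thesis using assms(1) by simp
qed simp

(* Bessel: for L in the dual, sum_k |L(e_k)|^2 <= K^2 (test L against
   sum_{k<N} conj(L(e_k)) e_k), so L(e_k) tends to 0. *)
lemma l2_dual_unit_vec_tendsto_zero:
  assumes L: "L \<in> l2_dual"
  shows "(\<lambda>k. L (unit_vec k)) \<longlonglongrightarrow> 0"
proof -
  obtain K where K: "\<And>x. x \<in> l2 \<Longrightarrow> cmod (L x) \<le> K * l2norm x"
    using L unfolding l2_dual_def by blast
  define c where "c k = L (unit_vec k)" for k
  define s where "s N = (\<Sum>k<N. (cmod (c k))\<^sup>2)" for N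
  have partial_sums_bounded: "s N \<le> K\<^sup>2" for N
  proof -
    define y where "y = (\<lambda>j. if j < N then cnj (c j) else 0)"
    have y: "y \<in> l2" "l2sq y = s N"
      using l2_finite_support[of "{..<N}" y] by (auto simp: y_def s_def)
    have "L y = (\<Sum>k<N. cnj (c k) * c k)"
      unfolding y_def c_def by (rule l2_dual_finite_combination[OF L])
    also have "\<dots> = of_real (s N)"
    proof -
      have "cnj (c k) * c k = of_real ((cmod (c k))\<^sup>2)" for k
        using complex_norm_square[of "c k"] by (simp only: mult.commute)
      then show ?thesis unfolding s_def of_real_sum by simp
    qed
    finally have Ly: "L y = of_real (s N)" .
    have "0 \<le> s N" by (simp add: s_def sum_nonneg)
    moreover have "l2norm y = sqrt (s N)" using y(2) by (simp add: l2norm_def l2sq_def)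
    ultimately show "s N \<le> K\<^sup>2"
      using K[OF y(1)] unfolding Ly by (intro le_square_if_le_mult_sqrt) simp_all
  qed
  have "summable (\<lambda>k. (cmod (c k))\<^sup>2)"
    using partial_sums_bounded
    by (intro summableI_nonneg_bounded[where x="K\<^sup>2"]) (auto simp: s_def)
  then have "(\<lambda>k. norm (c k)) \<longlonglongrightarrow> 0"
    using tendsto_real_sqrt[OF summable_LIMSEQ_zero] by fastforce
  then show ?thesis by (simp add: c_def tendsto_norm_zero_iff)
qed

(* The test points p_n = a_n e_0 + b_n e_{n+1} with a_n = 1/(n+2) and
   b_n^2 = 1 - 2 a_n^2: they lie in the ball, f(p_n) = a_n^2 / (1 - b_n^2) = 1/2,
   and p_n tends to 0 weakly. *)
definition test_a :: "nat \<Rightarrow> real" where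
  "test_a n = 1 / (real n + 2)"

definition test_b :: "nat \<Rightarrow> real" where
  "test_b n = sqrt (1 - 2 * (test_a n)\<^sup>2)"

definition test_point :: "nat \<Rightarrow> nat \<Rightarrow> complex" where
  "test_point n =
     (\<lambda>j. if j = 0 then of_real (test_a n) else if j = Suc n then of_real (test_b n) else 0)"

lemma test_a_bounds: "0 < test_a n" "test_a n \<le> 1 / 2"
  unfolding test_a_def by (auto simp: field_simps)

lemma test_b_squared: "(test_b n)\<^sup>2 = 1 - 2 * (test_a n)\<^sup>2"
proof -
  have "test_a n * test_a n \<le> (1 / 2) * (1 / 2)" using test_a_bounds[of n] by (intro mult_mono) auto
  then show ?thesis by (simp add: test_b_def power2_eq_square)
qed

lemma test_point_Bl2: "test_point n \<in> Bl2"
proof -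
  have support: "\<And>j. j \<notin> {0, Suc n} \<Longrightarrow> test_point n j = 0" by (simp add: test_point_def)
  have "l2sq (test_point n) = (test_a n)\<^sup>2 + (test_b n)\<^sup>2"
    using l2_finite_support(2)[of "{0, Suc n}", OF _ support] by (simp add: test_point_def)
  also have "\<dots> < 1" using test_b_squared[of n] test_a_bounds[of n] by simp
  finally have "l2norm (test_point n) < 1" by (simp add: l2norm_def l2sq_def[symmetric])
  then show ?thesis
    using l2_finite_support(1)[of "{0, Suc n}", OF _ support] by (simp add: Bl2_def)
qed

(* f(p_n) = a_n^2 / (2 a_n^2) = 1/2. *)
lemma fquot_test_point: "fquot (test_point n) = 1 / 2"
proof -
  have "tail_square (test_point n) = (\<Sum>k\<in>{n}. (test_point n (Suc k))\<^sup>2)"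
    unfolding tail_square_def by (rule suminf_finite) (auto simp: test_point_def)
  then have "tail_square (test_point n) = 1 - 2 * (of_real (test_a n))\<^sup>2"
    using arg_cong[OF test_b_squared[of n], of complex_of_real] by (simp add: test_point_def)
  then show ?thesis
    using test_point_Bl2[of n] test_a_bounds[of n]
    by (simp add: fquot_def restrB_def quotient_fun_def test_point_def)
qed

(* p_n tends to 0 weakly: L(p_n) = a_n L(e_0) + b_n L(e_{n+1}), and both terms
   tend to 0 by a_n -> 0, |b_n| <= 1 and Bessel. *)
lemma test_point_weakly_null:
  assumes L: "L \<in> l2_dual"
  shows "(\<lambda>n. L (test_point n)) \<longlonglongrightarrow> 0"
proof -
  have "test_point n = l2_scale (test_a n) (unit_vec 0) + l2_scale (test_b n) (unit_vec (Suc n))"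
    for n by (simp add: test_point_def l2_scale_def unit_vec_def fun_eq_iff)
  then have L_test_point:
      "L (test_point n) = test_a n * L (unit_vec 0) + test_b n * L (unit_vec (Suc n))" for n
    using L l2_scale_l2[OF unit_vec_l2] unit_vec_l2 by (simp add: l2_dual_def)
  have "(\<lambda>n. 1 / real (n + 2)) \<longlonglongrightarrow> 0"
    using LIMSEQ_ignore_initial_segment[OF lim_const_over_n[of 1], of 2] by simp
  then have "test_a \<longlonglongrightarrow> 0"
    by (simp add: test_a_def[abs_def] add.commute)
  then have "(\<lambda>n. complex_of_real (test_a n)) \<longlonglongrightarrow> complex_of_real 0"
    by (rule tendsto_of_real)
  then have "(\<lambda>n. complex_of_real (test_a n)) \<longlonglongrightarrow> 0"
    by (simp only: of_real_0)
  then have first: "(\<lambda>n. test_a n * L (unit_vec 0)) \<longlonglongrightarrow> 0"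
    by (rule tendsto_mult_left_zero)
  have "\<bar>test_b n\<bar> \<le> 1" for n
    using test_b_squared[of n] abs_le_square_iff[of "test_b n" 1] by simp
  then have dominated:
      "norm (complex_of_real (test_b n) * L (unit_vec (Suc n))) \<le> norm (L (unit_vec (Suc n)))"
    for n by (simp add: norm_mult mult_left_le_one_le)
  have second: "(\<lambda>n. test_b n * L (unit_vec (Suc n))) \<longlonglongrightarrow> 0"
    by (rule Lim_null_comparison[OF always_eventually[OF allI[OF dominated]]
        tendsto_norm_zero[OF LIMSEQ_Suc[OF l2_dual_unit_vec_tendsto_zero[OF L]]]])
  show ?thesis unfolding L_test_point using tendsto_add[OF first second] by simp
qed

lemma constant_one_Hinf: "restrB (\<lambda>_. 1) \<in> Hinf"
proof -
  have zero_dual: "(\<lambda>_. 0) \<in> l2_dual"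
    unfolding l2_dual_def by (intro CollectI conjI ballI allI exI[of _ 0]) simp_all
  have "holomorphic_Bl2 (restrB (\<lambda>_. 1))"
    unfolding holomorphic_Bl2_def
    by (intro ballI bexI[OF _ zero_dual]) (auto simp: restrB_def l2norm_nonneg)
  then show ?thesis by (auto simp: Hinf_def restrB_def)
qed

lemma limit_character_in_fiber:
  fixes p :: "nat \<Rightarrow> nat \<Rightarrow> complex" and G :: "nat filter"
  assumes G: "G \<noteq> bot" "G \<le> sequentially"
    and G_limits: "\<forall>s :: nat \<Rightarrow> complex. bounded (range s) \<longrightarrow> (\<exists>l. (s \<longlongrightarrow> l) G)"
    and p: "\<And>n. p n \<in> Bl2"
    and weakly_null: "\<And>L. L \<in> l2_dual \<Longrightarrow> (\<lambda>n. L (p n)) \<longlonglongrightarrow> 0"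
  shows "(\<lambda>g. Lim G (\<lambda>n. g (p n))) \<in> fiber0"
proof -
  define \<phi> where "\<phi> g = Lim G (\<lambda>n. g (p n))" for g :: "(nat \<Rightarrow> complex) \<Rightarrow> complex"
  have limit_value: "\<phi> g = l" if "((\<lambda>n. g (p n)) \<longlongrightarrow> l) G" for g l
    unfolding \<phi>_def using tendsto_Lim[OF G(1) that] .
  have limit: "((\<lambda>n. g (p n)) \<longlongrightarrow> \<phi> g) G" if g: "g \<in> Hinf" for g
  proof -
    obtain M where "\<forall>x\<in>Bl2. cmod (g x) \<le> M" using g unfolding Hinf_def by blast
    then have "bounded (range (\<lambda>n. g (p n)))"
      using p by (auto simp: bounded_iff)
    then obtain l where "((\<lambda>n. g (p n)) \<longlongrightarrow> l) G" using G_limits by blast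
    then show ?thesis using limit_value by simp
  qed
  have "\<phi> \<in> Hinf_spectrum"
    unfolding Hinf_spectrum_def
  proof (intro CollectI conjI ballI allI bexI)
    fix f g assume f: "f \<in> Hinf" and g: "g \<in> Hinf"
    show "\<phi> (\<lambda>x. f x + g x) = \<phi> f + \<phi> g" by (intro limit_value tendsto_add limit f g)
    show "\<phi> (\<lambda>x. f x * g x) = \<phi> f * \<phi> g" by (intro limit_value tendsto_mult limit f g)
  next
    fix c f assume f: "f \<in> Hinf"
    show "\<phi> (\<lambda>x. c * f x) = c * \<phi> f" by (intro limit_value tendsto_mult tendsto_const limit f)
  next
    show "restrB (\<lambda>_. 1) \<in> Hinf" by (rule constant_one_Hinf)
    have "\<phi> (restrB (\<lambda>_. 1)) = 1" by (rule limit_value) (simp add: restrB_def p)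
    then show "\<phi> (restrB (\<lambda>_. 1)) \<noteq> 0" by simp
  qed
  moreover have "\<phi> (restrB L) = 0" if L: "L \<in> l2_dual" for L
  proof (rule limit_value)
    show "((\<lambda>n. restrB L (p n)) \<longlongrightarrow> 0) G"
      using tendsto_mono[OF G(2) weakly_null[OF L]] p by (simp add: restrB_def)
  qed
  ultimately show ?thesis unfolding fiber0_def \<phi>_def by blast
qed

definition proj0 :: "(nat \<Rightarrow> complex) \<Rightarrow> (nat \<Rightarrow> complex)" where
  "proj0 x = (\<lambda>j. if j = 0 then x 0 else 0)"

lemma complement_proj0: "x - proj0 x = (\<lambda>j. if j = 0 then 0 else x j)"
  by (simp add: proj0_def fun_eq_iff)

lemma proj0_finite_rank: "finite_rank_l2 proj0"
  unfolding finite_rank_l2_def bounded_op_l2_def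
proof (intro conjI ballI allI exI)
  fix x :: "nat \<Rightarrow> complex" assume x: "x \<in> l2"
  have "l2sq (proj0 x) = (cmod (x 0))\<^sup>2"
    using l2_finite_support(2)[of "{0}" "proj0 x"] by (simp add: proj0_def)
  then show "l2norm (proj0 x) \<le> 1 * l2norm x"
    using coordinate_le_l2norm[OF x, of 0] by (simp add: l2norm_def l2sq_def)
  show "proj0 x = (\<Sum>i<(1::nat). l2_scale ((\<lambda>_. x 0) i) ((\<lambda>_. unit_vec 0) i))"
    by (simp add: proj0_def l2_scale_def unit_vec_def fun_eq_iff)
next
  fix x :: "nat \<Rightarrow> complex"
  show "proj0 x \<in> l2" using l2_finite_support(1)[of "{0}" "proj0 x"] by (simp add: proj0_def)
qed (auto simp: proj0_def l2_scale_def unit_vec_l2 fun_eq_iff)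

(* ||I - S|| = 1: I - S is a coordinate projection and fixes e_1. *)
lemma opnorm_complement_proj0: "opnorm_l2 (\<lambda>x. x - proj0 x) = 1"
  unfolding opnorm_l2_def
proof (rule cSup_eq_maximum)
  have "unit_vec 1 - proj0 (unit_vec 1) = unit_vec 1"
    by (simp add: complement_proj0 unit_vec_def fun_eq_iff)
  then show "1 \<in> {l2norm (x - proj0 x) |x. x \<in> l2 \<and> l2norm x \<le> 1}"
    using unit_vec_l2[of 1] l2norm_unit_vec[of 1] by (intro CollectI exI[of _ "unit_vec 1"]) simp
next
  fix r assume "r \<in> {l2norm (x - proj0 x) |x. x \<in> l2 \<and> l2norm x \<le> 1}"
  then obtain x where x: "x \<in> l2" "l2norm x \<le> 1" and r: "r = l2norm (x - proj0 x)" by blast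
  have le: "(cmod ((x - proj0 x) n))\<^sup>2 \<le> (cmod (x n))\<^sup>2" for n
    by (simp add: complement_proj0)
  have "summable (\<lambda>n. (cmod ((x - proj0 x) n))\<^sup>2)"
    by (rule summable_comparison_test'[OF l2D[OF x(1)]])
       (metis le abs_of_nonneg real_norm_def zero_le_power2)
  then have "(\<Sum>n. (cmod ((x - proj0 x) n))\<^sup>2) \<le> (\<Sum>n. (cmod (x n))\<^sup>2)"
    by (rule suminf_le[OF le _ l2D[OF x(1)]])
  then have "l2norm (x - proj0 x) \<le> l2norm x" unfolding l2norm_def by (rule real_sqrt_le_mono)
  then show "r \<le> 1" using r x(2) by simp
qed

(* f o P vanishes identically, since f vanishes where x_0 = 0. *)
lemma fquot_complement_proj0: "restrB (\<lambda>x. fquot (x - proj0 x)) = (\<lambda>x. 0)"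
  by (simp add: fun_eq_iff restrB_def fquot_def quotient_fun_def complement_proj0)

theorem mainTheorem3:
  shows "\<exists>S \<phi> f. finite_rank_l2 S \<and> opnorm_l2 (\<lambda>x. x - S x) = 1
          \<and> \<phi> \<in> fiber0 \<and> f \<in> Hinf
          \<and> \<phi> f \<noteq> \<phi> (restrB (\<lambda>x. f (x - S x)))"
proof -
  obtain G :: "nat filter" where G: "G \<noteq> bot" "G \<le> sequentially"
    and G_limits: "\<forall>s :: nat \<Rightarrow> complex. bounded (range s) \<longrightarrow> (\<exists>l. (s \<longlongrightarrow> l) G)"
    using bounded_sequences_converge_along_refinement by blast
  define \<phi> where "\<phi> g = Lim G (\<lambda>n. g (test_point n))" for g :: "(nat \<Rightarrow> complex) \<Rightarrow> complex"
  have "\<phi> \<in> fiber0"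
    unfolding \<phi>_def[abs_def]
    by (rule limit_character_in_fiber[where p=test_point,
          OF G G_limits test_point_Bl2 test_point_weakly_null])
  moreover have "\<phi> fquot = 1 / 2"
    unfolding \<phi>_def fquot_test_point by (rule tendsto_Lim[OF G(1) tendsto_const])
  moreover have "\<phi> (restrB (\<lambda>x. fquot (x - proj0 x))) = 0"
    unfolding \<phi>_def fquot_complement_proj0 by (rule tendsto_Lim[OF G(1) tendsto_const])
  ultimately show ?thesis
    using proj0_finite_rank opnorm_complement_proj0 fquot_Hinf by fastforce
qed

end
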